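(* Let $A\subset\mathbb N$ be a finite alphabet, $x\in A^{\mathbb N}$ any infinite word, and $w$ a finite word with $l(w)>\max A$. Let $\sigma_w$ be the substitution sending each $i\in A$ to the prefix of $w$ of length $l(w)-i$, and let $\int_w x=\sigma_w(x_0)\sigma_w(x_1)\sigma_w(x_2)\cdots$. If for every $n\in A$ the word $w$ is a prefix of $\sigma_w(n)\,w$, then $\int_w x$ is quasiperiodic with $w$ as a quasiperiod. In particular this holds whenever $A\subset\{0,\dots,k\}$ and $w=a^kba^k$ for letters $a\neq b$. *)

theory Defs
  imports Main "HOL-Library.Sublist"
begin

definition sigma :: "'a list \<Rightarrow> nat \<Rightarrow> 'a list" where
  "sigma w i = take (length w - i) w"

definition blockstart :: "'a list \<Rightarrow> (nat \<Rightarrow> nat) \<Rightarrow> nat \<Rightarrow> nat" where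
  "blockstart w x k = (\<Sum>j<k. length (sigma w (x j)))"

text \<open>The infinite word int_w x = sigma_w(x_0) sigma_w(x_1) sigma_w(x_2) ...
  (well defined when all blocks are nonempty, i.e. l(w) > x_n for all n).\<close>
definition integ :: "'a list \<Rightarrow> (nat \<Rightarrow> nat) \<Rightarrow> nat \<Rightarrow> 'a" where
  "integ w x p = (let k = (GREATEST k. blockstart w x k \<le> p)
                  in sigma w (x k) ! (p - blockstart w x k))"

definition occurs_at :: "(nat \<Rightarrow> 'a) \<Rightarrow> 'a list \<Rightarrow> nat \<Rightarrow> bool" where
  "occurs_at z q j \<longleftrightarrow> (\<forall>t<length q. z (j + t) = q ! t)"

definition quasiperiod :: "(nat \<Rightarrow> 'a) \<Rightarrow> 'a list \<Rightarrow> bool" where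
  "quasiperiod z q \<longleftrightarrow> q \<noteq> [] \<and> (\<forall>i. \<exists>j\<le>i. i < j + length q \<and> occurs_at z q j)"

end

theory Submission
  imports Defs
begin

text \<open>Let \<open>b\<^sub>k\<close> be the position where the block \<open>\<sigma>\<^sub>w(x\<^sub>k)\<close> starts. The hypothesis that \<open>w\<close> is a
  prefix of \<open>\<sigma>\<^sub>w(n) w\<close> says that \<open>w\<close> read from position \<open>l(\<sigma>\<^sub>w(n))\<close> on repeats itself, so by
  induction on \<open>t\<close> the letter at \<open>b\<^sub>k + t\<close> is \<open>w\<^sub>t\<close>: either it lies in the block \<open>\<sigma>\<^sub>w(x\<^sub>k)\<close>,
  a prefix of \<open>w\<close>, or it is the letter at \<open>b\<^sub>k\<^sub>+\<^sub>1 + t'\<close> with \<open>t' < t\<close>. Hence \<open>w\<close> occurs at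
  every \<open>b\<^sub>k\<close>, and since the blocks are nonempty and no longer than \<open>w\<close>, these occurrences
  cover every position. For \<open>w = a\<^sup>kba\<^sup>k\<close> and \<open>n \<le> k\<close> one has \<open>\<sigma>\<^sub>w(n) w = a\<^sup>kba\<^sup>k\<^sup>-\<^sup>na\<^sup>kba\<^sup>k\<close>.\<close>

lemma sigma_length [simp]: "length (sigma w i) = length w - i"
  by (simp add: sigma_def)

lemma blockstart_0 [simp]: "blockstart w x 0 = 0"
  by (simp add: blockstart_def)

lemma blockstart_Suc: "blockstart w x (Suc k) = blockstart w x k + (length w - x k)"
  by (simp add: blockstart_def)

lemma blockstart_mono:
  assumes "k \<le> k'"
  shows "blockstart w x k \<le> blockstart w x k'"
  using assms by (induction k' rule: dec_induct) (simp_all add: blockstart_Suc)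

lemma blockstart_ge_index:
  assumes "\<forall>n. x n < length w"
  shows "k \<le> blockstart w x k"
proof (induction k)
  case (Suc k)
  then show ?case using assms[rule_format, of k] by (simp add: blockstart_Suc)
qed simp

lemma integ_blockstart_add:
  assumes "t < length w - x k"
  shows "integ w x (blockstart w x k + t) = sigma w (x k) ! t"
proof -
  have "(GREATEST k'. blockstart w x k' \<le> blockstart w x k + t) = k"
  proof (rule Greatest_equality)
    fix k' assume "blockstart w x k' \<le> blockstart w x k + t"
    then have "blockstart w x k' < blockstart w x (Suc k)"
      using assms by (simp add: blockstart_Suc)
    then show "k' \<le> k"
      using blockstart_mono[of "Suc k" k' w x] by (meson not_less not_less_eq_eq)
  qed simp
  then show ?thesis by (simp add: integ_def)
qed

lemma nth_shift_of_prefix_append: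
  assumes "prefix w (u @ w)" and "length u \<le> t" and "t < length w"
  shows "w ! t = w ! (t - length u)"
proof -
  have "w ! t = (u @ w) ! t" using assms by (metis prefix_def nth_append)
  then show ?thesis using assms(2) by (simp add: nth_append)
qed

lemma occurs_at_blockstart:
  assumes nonempty: "\<forall>n. x n < length w"
    and prefix: "\<forall>n. prefix w (sigma w (x n) @ w)"
  shows "occurs_at (integ w x) w (blockstart w x k)"
  unfolding occurs_at_def
proof (intro allI impI)
  fix t assume "t < length w"
  then show "integ w x (blockstart w x k + t) = w ! t"
  proof (induction t arbitrary: k rule: less_induct)
    case (less t)
    show ?case
    proof (cases "t < length w - x k")
      case True
      then show ?thesis by (simp add: integ_blockstart_add sigma_def)
    next
      case False
      define t' where "t' = t - (length w - x k)"
      have t': "t' < t" using False nonempty[rule_format, of k] less.prems by (simp add: t'_def)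
      moreover have "blockstart w x k + t = blockstart w x (Suc k) + t'"
        using False by (simp add: t'_def blockstart_Suc)
      moreover have "w ! t = w ! t'"
        using nth_shift_of_prefix_append[OF prefix[rule_format, of k]] False less.prems
        by (simp add: t'_def)
      ultimately show ?thesis using less.IH[OF t'] t' less.prems by simp
    qed
  qed
qed

lemma blockstart_interval:
  assumes "\<forall>n. x n < length w"
  obtains k where "blockstart w x k \<le> i" and "i < blockstart w x (Suc k)"
proof -
  let ?P = "\<lambda>k. blockstart w x k \<le> i"
  have bounded: "\<forall>k. ?P k \<longrightarrow> k \<le> i"
    using blockstart_ge_index[OF assms] le_trans by blast
  have "?P (Greatest ?P)"
    by (rule GreatestI_nat[of _ 0 i]) (simp_all add: bounded)
  moreover have "\<not> ?P (Suc (Greatest ?P))"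
  proof
    assume "?P (Suc (Greatest ?P))"
    then have "Suc (Greatest ?P) \<le> Greatest ?P" by (rule Greatest_le_nat) (use bounded in blast)
    then show False by simp
  qed
  ultimately show ?thesis using that by simp
qed

theorem quasiperiod_integ:
  assumes "\<forall>n. x n < length w" and "\<forall>n. prefix w (sigma w (x n) @ w)"
  shows "quasiperiod (integ w x) w"
  unfolding quasiperiod_def
proof (intro conjI allI)
  show "w \<noteq> []" using assms(1) by auto
  fix i
  obtain k where "blockstart w x k \<le> i" and "i < blockstart w x (Suc k)"
    using blockstart_interval[OF assms(1)] .
  moreover have "blockstart w x (Suc k) \<le> blockstart w x k + length w"
    by (simp add: blockstart_Suc)
  ultimately show "\<exists>j\<le>i. i < j + length w \<and> occurs_at (integ w x) w j"
    using occurs_at_blockstart[OF assms] by fastforce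
qed

lemma prefix_sigma_replicate_append:
  fixes k :: nat and a b :: 'a
  defines "w \<equiv> replicate k a @ [b] @ replicate k a"
  assumes "n \<le> k"
  shows "prefix w (sigma w n @ w)"
proof -
  have "sigma w n = replicate k a @ [b] @ replicate (k - n) a"
    using assms by (simp add: w_def sigma_def Suc_diff_le take_Cons')
  moreover have "replicate (k - n) a @ replicate k a = replicate k a @ replicate (k - n) a"
    by (simp flip: replicate_add add: add.commute)
  ultimately show ?thesis by (simp add: w_def prefix_def) (metis append.assoc)
qed

theorem mainTheorem2:
  fixes A :: "nat set" and x :: "nat \<Rightarrow> nat"
  assumes "finite A" and "\<forall>n. x n \<in> A"
  shows "(\<forall>w :: 'a list. length w > Max A \<and> (\<forall>n\<in>A. prefix w (sigma w n @ w))
            \<longrightarrow> quasiperiod (integ w x) w)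
       \<and> (\<forall>k (a :: 'a) b. A \<subseteq> {0..k} \<and> a \<noteq> b
            \<longrightarrow> quasiperiod (integ (replicate k a @ [b] @ replicate k a) x)
                             (replicate k a @ [b] @ replicate k a))"
proof (intro conjI allI impI)
  fix w :: "'a list"
  assume w: "length w > Max A \<and> (\<forall>n\<in>A. prefix w (sigma w n @ w))"
  then have "\<forall>n. x n < length w" using assms Max_ge le_less_trans by blast
  then show "quasiperiod (integ w x) w" using w assms by (intro quasiperiod_integ) auto
next
  fix k and a b :: 'a
  assume "A \<subseteq> {0..k} \<and> a \<noteq> b"
  then have "\<forall>n. x n \<le> k" using assms by auto
  then show "quasiperiod (integ (replicate k a @ [b] @ replicate k a) x)
                             (replicate k a @ [b] @ replicate k a)"
    by (intro quasiperiod_integ allI prefix_sigma_replicate_append) (auto intro: le_imp_less_Suc trans_le_add1)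
qed

end
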